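(* For $n\ge 1$, the number $t_n(321)$ of shallow $321$-avoiding permutations in $S_n$ equals $F_{2n-1}$.
   Context: For $\pi\in S_n$: $D(\pi)=\sum_{i}|\pi_i-i|$, $I(\pi)$ is the number of inversions, $T(\pi)=n-\mathrm{cyc}(\pi)$ with $\mathrm{cyc}$ the number of cycles in the disjoint cycle decomposition; $\pi$ is shallow if $I(\pi)+T(\pi)=D(\pi)$. A permutation avoids a pattern $\sigma$ if it has no subsequence order-isomorphic to $\sigma$. $F_m$ are the Fibonacci numbers with $F_1=F_2=1$. *)

theory Defs
  imports "HOL-Combinatorics.Combinatorics" "HOL-Number_Theory.Fib"
begin

text \<open>Permutations in S_n are modelled as functions p :: nat => nat with
  p permutes {1..n}, so pi_i = p i for i in {1..n}.\<close>

definition total_displacement :: "nat \<Rightarrow> (nat \<Rightarrow> nat) \<Rightarrow> int" where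
  "total_displacement n p = (\<Sum>i\<in>{1..n}. \<bar>int (p i) - int i\<bar>)"

definition inversions :: "nat \<Rightarrow> (nat \<Rightarrow> nat) \<Rightarrow> nat" where
  "inversions n p = card {(i, j). i \<in> {1..n} \<and> j \<in> {1..n} \<and> i < j \<and> p i > p j}"

text \<open>Number of cycles in the disjoint cycle decomposition (fixed points count as cycles):
  the number of distinct orbits of elements of {1..n}.\<close>
definition num_cycles :: "nat \<Rightarrow> (nat \<Rightarrow> nat) \<Rightarrow> nat" where
  "num_cycles n p = card (orbit p ` {1..n})"

definition reflection_length :: "nat \<Rightarrow> (nat \<Rightarrow> nat) \<Rightarrow> nat" where
  "reflection_length n p = n - num_cycles n p"

definition shallow :: "nat \<Rightarrow> (nat \<Rightarrow> nat) \<Rightarrow> bool" where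
  "shallow n p \<longleftrightarrow>
     int (inversions n p) + int (reflection_length n p) = total_displacement n p"

definition avoids_321 :: "nat \<Rightarrow> (nat \<Rightarrow> nat) \<Rightarrow> bool" where
  "avoids_321 n p \<longleftrightarrow>
     \<not> (\<exists>i j k. 1 \<le> i \<and> i < j \<and> j < k \<and> k \<le> n \<and> p i > p j \<and> p j > p k)"

end

theory Submission
  imports Defs
begin

text \<open>For a 321-avoiding permutation every point has inversions on one side only, which gives
  \<open>D(\<pi>) = 2 I(\<pi>)\<close>; so a 321-avoiding \<open>\<pi>\<close> is shallow iff \<open>I(\<pi>) = T(\<pi>)\<close>.  Taking the largest
  point \<open>n\<close> out of its cycle keeps the cycle count and lowers \<open>I\<close> by \<open>1 + 2G\<close>, where \<open>G\<close> counts
  later values above \<open>\<pi>(n)\<close>; by induction \<open>T \<le> I\<close>, with equality iff the smaller permutation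
  has equality and \<open>G = 0\<close>.  The same induction shows that permutations with \<open>I = T\<close> avoid 321.
  Sorting them by the position of \<open>n\<close> (fixed, at position \<open>n - 1\<close>, or earlier, where it forces
  the smaller permutation to move \<open>n - 1\<close>) gives \<open>t\<^sub>n\<^sub>+\<^sub>2 + t\<^sub>n = 3 t\<^sub>n\<^sub>+\<^sub>1\<close>, the recurrence
  of \<open>F\<^sub>2\<^sub>n\<^sub>-\<^sub>1\<close>.\<close>

section \<open>Inversions and displacement\<close>

definition inversion_count :: "nat set \<Rightarrow> (nat \<Rightarrow> nat) \<Rightarrow> nat" where
  "inversion_count S p = (\<Sum>i\<in>S. \<Sum>j\<in>S. of_bool (i < j \<and> p j < p i))"

lemma inversions_row_sum:
  "inversions n p = (\<Sum>i\<in>{1..n}. card {j\<in>{1..n}. i < j \<and> p j < p i})"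
proof -
  have "{(i, j). i \<in> {1..n} \<and> j \<in> {1..n} \<and> i < j \<and> p i > p j}
      = (SIGMA i:{1..n}. {j\<in>{1..n}. i < j \<and> p j < p i})"
    by (auto simp del: atLeastAtMost_iff)
  then show ?thesis unfolding inversions_def by (simp add: card_SigmaI)
qed

lemma inversions_eq_inversion_count: "inversions n p = inversion_count {1..n} p"
  unfolding inversions_row_sum inversion_count_def by (simp add: Int_def)

lemma inversions_column_sum:
  "inversions n p = (\<Sum>j\<in>{1..n}. card {i\<in>{1..n}. i < j \<and> p j < p i})"
  unfolding inversions_eq_inversion_count inversion_count_def
  by (subst sum.swap) (simp add: Int_def)

lemma inversion_count_cong:
  "(\<And>i. i \<in> S \<Longrightarrow> p i = q i) \<Longrightarrow> inversion_count S p = inversion_count S q"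
  unfolding inversion_count_def by (intro sum.cong) auto

lemma inversion_count_insert:
  assumes "finite S" and "x \<notin> S"
  shows "inversion_count (insert x S) p = inversion_count S p
           + (\<Sum>j\<in>S. of_bool (x < j \<and> p j < p x) + of_bool (j < x \<and> p x < p j))"
  using assms by (simp add: inversion_count_def sum.distrib del: sum_of_bool_eq)

lemma avoids_321_iff:
  "avoids_321 n p \<longleftrightarrow>
     (\<forall>i j l. 1 \<le> i \<longrightarrow> i < j \<longrightarrow> j < l \<longrightarrow> l \<le> n \<longrightarrow> \<not> (p l < p j \<and> p j < p i))"
  unfolding avoids_321_def by blast

lemma card_smaller_values:
  assumes p: "p permutes {1..n}" and i: "i \<in> {1..n}"
  shows "card {j\<in>{1..n}. p j < p i} = p i - 1"
proof -
  have "p ` {j\<in>{1..n}. p j < p i} = {x \<in> p ` {1..n}. x < p i}" by auto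
  also have "\<dots> = {1..<p i}"
    using permutes_image[OF p] permutes_in_image[OF p, of i] i by auto
  finally show ?thesis
    using card_image[OF inj_on_subset[OF permutes_inj[OF p] subset_UNIV]] by (metis card_atLeastLessThan)
qed

text \<open>Of the \<open>p i - 1\<close> smaller values, those placed after \<open>i\<close> are the inversions
  \<open>R\<close> starting at \<open>i\<close>; of the \<open>i - 1\<close> earlier positions, those with larger values are the
  inversions \<open>L\<close> ending at \<open>i\<close>.  Hence \<open>p i - i = R - L\<close>, and 321-avoidance forbids
  \<open>L\<close> and \<open>R\<close> from being both positive.\<close>

lemma displacement_avoiding_321:
  assumes p: "p permutes {1..n}" and av: "avoids_321 n p" and i: "i \<in> {1..n}"
  shows "\<bar>int (p i) - int i\<bar>
           = int (card {j\<in>{1..n}. j < i \<and> p i < p j} + card {j\<in>{1..n}. i < j \<and> p j < p i})"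
proof -
  define L where "L = card {j\<in>{1..n}. j < i \<and> p i < p j}"
  define R where "R = card {j\<in>{1..n}. i < j \<and> p j < p i}"
  define c where "c = card {j\<in>{1..n}. j < i \<and> p j < p i}"
  have "{j\<in>{1..n}. p j < p i} = {j\<in>{1..n}. j < i \<and> p j < p i} \<union> {j\<in>{1..n}. i < j \<and> p j < p i}"
    using less_linear[of _ i] by auto
  then have "card {j\<in>{1..n}. p j < p i} = c + R"
    unfolding c_def R_def by (simp add: card_Un_disjoint disjoint_iff)
  then have below: "p i - 1 = c + R" using card_smaller_values[OF p i] by simp
  have "{j\<in>{1..n}. j < i} = {j\<in>{1..n}. j < i \<and> p j < p i} \<union> {j\<in>{1..n}. j < i \<and> p i < p j}"
    using permutes_inj[OF p] by (auto dest: injD[of p _ i])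
  then have "card {j\<in>{1..n}. j < i} = c + L"
    unfolding c_def L_def by (simp add: card_Un_disjoint disjoint_iff)
  moreover have "{j\<in>{1..n}. j < i} = {1..<i}" using i by auto
  ultimately have before: "i - 1 = c + L" by simp
  have "L = 0 \<or> R = 0"
  proof (rule ccontr)
    assume "\<not> (L = 0 \<or> R = 0)"
    then obtain j l where "j \<in> {1..n}" "j < i" "p i < p j" "l \<in> {1..n}" "i < l" "p l < p i"
      unfolding L_def R_def by (auto simp: card_gt_0_iff simp del: atLeastAtMost_iff)
    then show False using av unfolding avoids_321_def by auto
  qed
  moreover have "1 \<le> p i" using permutes_in_image[OF p, of i] i by auto
  ultimately show ?thesis using below before i unfolding L_def[symmetric] R_def[symmetric] by auto
qed

lemma total_displacement_avoiding_321:
  assumes "p permutes {1..n}" and "avoids_321 n p"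
  shows "total_displacement n p = 2 * int (inversions n p)"
proof -
  have "total_displacement n p = int (\<Sum>i\<in>{1..n}.
      card {j\<in>{1..n}. j < i \<and> p i < p j} + card {j\<in>{1..n}. i < j \<and> p j < p i})"
    unfolding total_displacement_def of_nat_sum
    by (intro sum.cong) (simp_all add: displacement_avoiding_321[OF assms])
  also have "\<dots> = int (inversions n p + inversions n p)"
    using inversions_column_sum[of n p] inversions_row_sum[of n p] by (simp add: sum.distrib)
  finally show ?thesis by simp
qed

section \<open>Removing the largest point from its cycle\<close>

lemma permutes_Suc_fixed_iff:
  "(p permutes {1..Suc k} \<and> p (Suc k) = Suc k) \<longleftrightarrow> p permutes {1..k}"
proof
  assume p: "p permutes {1..Suc k} \<and> p (Suc k) = Suc k"
  show "p permutes {1..k}"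
  proof (rule permutes_superset[OF conjunct1[OF p]])
    fix x assume "x \<in> {1..Suc k} - {1..k}"
    then have "x = Suc k" by auto
    then show "p x = x" using p by simp
  qed
next
  assume "p permutes {1..k}"
  then show "p permutes {1..Suc k} \<and> p (Suc k) = Suc k"
    using permutes_subset[of p "{1..k}" "{1..Suc k}"] permutes_not_in[of p "{1..k}" "Suc k"] by auto
qed

lemma permutation_of_permutes_atLeastAtMost: "p permutes {1..n::nat} \<Longrightarrow> permutation p"
  by (erule permutes_imp_permutation[rotated]) simp

lemma inversions_Suc_eq:
  assumes "p permutes {1..k}"
  shows "inversions (Suc k) p = inversions k p"
proof -
  have fixed: "p (Suc k) = Suc k" and bounded: "i \<in> {1..k} \<Longrightarrow> p i \<in> {1..k}" for i
    using permutes_not_in[OF assms] permutes_in_image[OF assms] by auto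
  have "{(i, j). i \<in> {1..Suc k} \<and> j \<in> {1..Suc k} \<and> i < j \<and> p i > p j}
      = {(i, j). i \<in> {1..k} \<and> j \<in> {1..k} \<and> i < j \<and> p i > p j}"
  proof safe
    fix i j assume "i \<in> {1..Suc k}" "j \<in> {1..Suc k}" "i < j" "p j < p i"
    moreover from this have "j \<noteq> Suc k"
      using fixed bounded[of i] by (cases "i = Suc k") auto
    ultimately show "i \<in> {1..k}" "j \<in> {1..k}" by auto
  qed auto
  then show ?thesis unfolding inversions_def by simp
qed

lemma num_cycles_Suc_eq:
  assumes "p permutes {1..k}"
  shows "num_cycles (Suc k) p = Suc (num_cycles k p)"
proof -
  have perm: "permutation p" using permutation_of_permutes_atLeastAtMost[OF assms] .
  have fixed: "orbit p (Suc k) = {Suc k}"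
    by (rule orbit_eq_singleton_iff[THEN iffD2]) (simp add: permutes_not_in[OF assms])
  have "orbit p (Suc k) \<notin> orbit p ` {1..k}"
  proof
    assume "orbit p (Suc k) \<in> orbit p ` {1..k}"
    then obtain x where "x \<in> {1..k}" "orbit p x = {Suc k}" using fixed by auto
    then show False using permutation_self_in_orbit[OF perm, of x] by auto
  qed
  moreover have "orbit p ` {1..Suc k} = insert (orbit p (Suc k)) (orbit p ` {1..k})"
    by (auto simp: atLeastAtMostSuc_conv)
  ultimately show ?thesis unfolding num_cycles_def by simp
qed

text \<open>Removing the largest point \<open>Suc k\<close> from its cycle \<open>m \<rightarrow> Suc k \<rightarrow> p (Suc k)\<close>,
  and inserting it into the cycle of \<open>q\<close> right after \<open>m\<close>.\<close>

definition remove_top :: "nat \<Rightarrow> (nat \<Rightarrow> nat) \<Rightarrow> nat \<Rightarrow> nat \<Rightarrow> nat" where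
  "remove_top k p m = p(m := p (Suc k), Suc k := Suc k)"

definition insert_top :: "nat \<Rightarrow> (nat \<Rightarrow> nat) \<Rightarrow> nat \<Rightarrow> nat \<Rightarrow> nat" where
  "insert_top k q m = q(m := Suc k, Suc k := q m)"

lemma permutes_remove_top:
  assumes p: "p permutes {1..Suc k}" and m: "m \<in> {1..k}" and pm: "p m = Suc k"
  shows "remove_top k p m permutes {1..k}"
proof -
  have inj: "p x = p y \<longleftrightarrow> x = y" for x y
    using permutes_inj[OF p] by (simp add: inj_eq)
  have top: "p x = Suc k \<longleftrightarrow> x = m" for x
    using pm inj by metis
  have "remove_top k p m = transpose (Suc k) (p (Suc k)) \<circ> p"
    using m by (auto simp: remove_top_def transpose_def fun_eq_iff inj top)
  moreover have "transpose (Suc k) (p (Suc k)) \<circ> p permutes {1..k}"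
    using permutes_insert_lemma[of p "Suc k" "{1..k}"] p by (simp add: atLeastAtMostSuc_conv)
  ultimately show ?thesis by simp
qed

lemma permutes_insert_top:
  assumes q: "q permutes {1..k}" and m: "m \<in> {1..k}"
  shows "insert_top k q m permutes {1..Suc k}"
proof -
  have fixed: "q (Suc k) = Suc k" and qm: "q m \<in> {1..k}"
    using permutes_not_in[OF q] permutes_in_image[OF q] m by auto
  have inj: "q x = q y \<longleftrightarrow> x = y" for x y
    using permutes_inj[OF q] by (simp add: inj_eq)
  have top: "q x = Suc k \<longleftrightarrow> x = Suc k" for x
    using fixed inj by metis
  have "insert_top k q m = transpose (Suc k) (q m) \<circ> q"
    using m qm by (auto simp: insert_top_def transpose_def fun_eq_iff inj top)
  moreover have "transpose (Suc k) (q m) \<circ> q permutes {1..Suc k}"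
    using qm permutes_subset[OF q, of "{1..Suc k}"] by (intro permutes_compose permutes_swap_id) auto
  ultimately show ?thesis by simp
qed

lemma remove_insert_top:
  assumes "q permutes {1..k}" and "m \<in> {1..k}"
  shows "remove_top k (insert_top k q m) m = q"
  using assms permutes_not_in[OF assms(1), of "Suc k"]
  by (auto simp: remove_top_def insert_top_def fun_eq_iff)

lemma insert_remove_top:
  assumes "m \<in> {1..k}" and "p m = Suc k"
  shows "insert_top k (remove_top k p m) m = p"
  using assms by (auto simp: remove_top_def insert_top_def fun_eq_iff)

lemma obtain_preimage_top:
  assumes "p permutes {1..Suc k}" and "p (Suc k) \<noteq> Suc k"
  obtains m where "m \<in> {1..k}" and "p m = Suc k"
proof
  show "p (inv p (Suc k)) = Suc k" using permutes_inverses(1)[OF assms(1)] .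
  then show "inv p (Suc k) \<in> {1..k}"
    using permutes_in_image[OF permutes_inv[OF assms(1)], of "Suc k"] assms(2)
    by (auto simp: le_Suc_eq)
qed

lemma remove_top_in_orbit:
  assumes p: "p permutes {1..Suc k}" and m: "m \<in> {1..k}" and pm: "p m = Suc k"
    and z: "z \<noteq> Suc k"
  shows "remove_top k p m z \<in> orbit p z" and "remove_top k p m z \<noteq> Suc k"
proof -
  have top: "p y = Suc k \<longleftrightarrow> y = m" for y
    using pm permutes_inj[OF p] by (metis inj_eq)
  have "remove_top k p m z \<in> orbit p z \<and> remove_top k p m z \<noteq> Suc k"
  proof (cases "z = m")
    case True
    have "p (p z) \<in> orbit p z" by (rule orbit.step[OF orbit.base])
    moreover have "p (Suc k) \<noteq> Suc k" using top m by auto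
    ultimately show ?thesis using True m pm by (simp add: remove_top_def)
  next
    case False
    then show ?thesis using z top[of z] orbit.base[of p z] by (simp add: remove_top_def)
  qed
  then show "remove_top k p m z \<in> orbit p z" and "remove_top k p m z \<noteq> Suc k" by simp_all
qed

lemma orbit_remove_top:
  assumes p: "p permutes {1..Suc k}" and m: "m \<in> {1..k}" and pm: "p m = Suc k"
    and x: "x \<in> {1..k}"
  shows "orbit (remove_top k p m) x = orbit p x - {Suc k}"
proof -
  define q where "q = remove_top k p m"
  have q_other: "z \<noteq> m \<Longrightarrow> z \<noteq> Suc k \<Longrightarrow> q z = p z" for z
    using m by (simp add: q_def remove_top_def)
  have q_m: "q m = p (Suc k)" using m by (simp add: q_def remove_top_def)
  note q_step = remove_top_in_orbit[OF p m pm, folded q_def]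
  have q_orbit: "y \<in> orbit p x \<and> y \<noteq> Suc k" if "y \<in> orbit q x" for y
    using that
  proof induction
    case base
    show ?case using q_step[of x] x by auto
  next
    case (step y)
    then show ?case using q_step[of y] orbit_trans[of "q y" p y x] by simp
  qed
  have p_orbit: "y \<in> orbit q x \<or> (y = Suc k \<and> m \<in> orbit q x)" if "y \<in> orbit p x" for y
    using that
  proof induction
    case base
    have "x \<in> orbit q x"
      unfolding q_def by (rule permutation_self_in_orbit permutation_of_permutes_atLeastAtMost
        permutes_remove_top[OF p m pm])+
    then show ?case using q_other[of x] x pm orbit.base[of q x] by (cases "x = m") auto
  next
    case (step y)
    from step.IH show ?case
    proof
      assume y: "y \<in> orbit q x"
      then have "y \<noteq> Suc k" using q_orbit by simp
      then show ?case using y q_other[of y] pm orbit.step[OF y] by (cases "y = m") auto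
    next
      assume "y = Suc k \<and> m \<in> orbit q x"
      then show ?case using q_m orbit.step[of m q x] by auto
    qed
  qed
  show ?thesis unfolding q_def[symmetric] using q_orbit p_orbit by blast
qed

lemma num_cycles_remove_top:
  assumes p: "p permutes {1..Suc k}" and m: "m \<in> {1..k}" and pm: "p m = Suc k"
  shows "num_cycles k (remove_top k p m) = num_cycles (Suc k) p"
proof -
  have perm: "permutation p" using permutation_of_permutes_atLeastAtMost[OF p] .
  have "orbit p (Suc k) = orbit p m" using permutation_orbit_step[OF perm, of m] pm by simp
  then have cycles_p: "orbit p ` {1..Suc k} = orbit p ` {1..k}"
    using m by (auto simp: atLeastAtMostSuc_conv)
  have cycles_q: "orbit (remove_top k p m) ` {1..k} = (\<lambda>C. C - {Suc k}) ` orbit p ` {1..k}"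
    using orbit_remove_top[OF p m pm] by (simp add: image_image)
  have "inj_on (\<lambda>C. C - {Suc k}) (orbit p ` {1..k})"
  proof (rule inj_onI)
    fix C D assume "C \<in> orbit p ` {1..k}" "D \<in> orbit p ` {1..k}" and CD: "C - {Suc k} = D - {Suc k}"
    then obtain x y where x: "x \<in> {1..k}" "C = orbit p x" and y: "y \<in> {1..k}" "D = orbit p y"
      by auto
    have "x \<in> C - {Suc k}" using x permutation_self_in_orbit[OF perm, of x] by auto
    then have "x \<in> orbit p y" using CD y by simp
    then have "orbit p x = orbit p y" by (rule orbit_cyclic_eq3[OF cyclic_on_orbit'[OF perm]])
    then show "C = D" using x y by simp
  qed
  then show ?thesis unfolding num_cycles_def cycles_p cycles_q by (rule card_image)
qed

lemma inversions_remove_top: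
  assumes p: "p permutes {1..Suc k}" and m: "m \<in> {1..k}" and pm: "p m = Suc k"
  shows "inversions (Suc k) p = inversions k (remove_top k p m) + 1
           + 2 * card {j. m < j \<and> j < Suc k \<and> p (Suc k) < p j}"
proof -
  define q where "q = remove_top k p m"
  define v where "v = p (Suc k)"
  define Q where "Q = {1..k} - {m}"
  define g :: "(nat \<Rightarrow> nat) \<Rightarrow> nat \<Rightarrow> nat \<Rightarrow> nat"
    where "g r x j = of_bool (x < j \<and> r j < r x) + of_bool (j < x \<and> r x < r j)"
    for r :: "nat \<Rightarrow> nat" and x j :: nat
  have inj: "p x = p y \<longleftrightarrow> x = y" for x y
    using permutes_inj[OF p] by (simp add: inj_eq)
  have top: "p z = Suc k \<longleftrightarrow> z = m" for z
    using pm inj by metis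
  have v: "v < Suc k"
    using permutes_in_image[OF p, of "Suc k"] top[of "Suc k"] m by (auto simp: v_def)
  have Q: "i < Suc k \<and> i \<noteq> m \<and> q i = p i \<and> p i < Suc k \<and> p i \<noteq> v" if "i \<in> Q" for i
  proof -
    have i: "i \<in> {1..k}" "i \<noteq> m" using that by (auto simp: Q_def)
    then have "p i \<in> {1..Suc k}" "p i \<noteq> Suc k" "p i \<noteq> v"
      using permutes_in_image[OF p, of i] top[of i] by (auto simp: v_def inj)
    then show ?thesis using i by (auto simp: q_def remove_top_def)
  qed
  have "finite Q" "m \<notin> Q" "Suc k \<notin> insert m Q" using m by (auto simp: Q_def)
  note insert = inversion_count_insert[OF this(1,2)] inversion_count_insert[of "insert m Q", OF _ this(3)]
  have "{1..k} = insert m Q" "{1..Suc k} = insert (Suc k) (insert m Q)"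
    using m by (auto simp: Q_def)
  then have inv_p: "inversions (Suc k) p
      = inversion_count Q p + (\<Sum>j\<in>Q. g p m j + g p (Suc k) j) + g p (Suc k) m"
    and inv_q: "inversions k q = inversion_count Q q + (\<Sum>j\<in>Q. g q m j)"
    using \<open>finite Q\<close> \<open>m \<notin> Q\<close> unfolding g_def
    by (simp_all add: inversions_eq_inversion_count insert sum.distrib del: sum_of_bool_eq)
  have same_rest: "inversion_count Q q = inversion_count Q p"
    using Q by (intro inversion_count_cong) simp
  have "g p m j + g p (Suc k) j = g q m j + 2 * of_bool (m < j \<and> v < p j)" if "j \<in> Q" for j
    using Q[OF that] pm m by (cases "m < j"; cases "v < p j") (auto simp: g_def q_def v_def remove_top_def)
  then have "(\<Sum>j\<in>Q. g p m j + g p (Suc k) j) = (\<Sum>j\<in>Q. g q m j) + 2 * card (Q \<inter> {j. m < j \<and> v < p j})"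
    using \<open>finite Q\<close> by (simp add: sum.distrib flip: sum_distrib_left)
  moreover have "g p (Suc k) m = 1" using m v pm by (simp add: g_def v_def)
  moreover have "Q \<inter> {j. m < j \<and> v < p j} = {j. m < j \<and> j < Suc k \<and> p (Suc k) < p j}"
    using m by (auto simp: Q_def v_def)
  ultimately show ?thesis using inv_p inv_q same_rest by (simp add: q_def)
qed

section \<open>Permutations with \<open>I = T\<close>\<close>

text \<open>Since \<open>T(p) = n - num_cycles n p\<close>, this is \<open>T(p) \<le> I(p)\<close>; \<open>tight_perms n\<close> below
  collects the cases of equality.\<close>

lemma le_inversions_add_num_cycles:
  "p permutes {1..n} \<Longrightarrow> n \<le> inversions n p + num_cycles n p"
proof (induction n arbitrary: p)
  case 0
  then show ?case by simp
next
  case (Suc k)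
  show ?case
  proof (cases "p (Suc k) = Suc k")
    case True
    then have "p permutes {1..k}" using Suc.prems permutes_Suc_fixed_iff by blast
    then show ?thesis
      using Suc.IH inversions_Suc_eq num_cycles_Suc_eq by fastforce
  next
    case False
    then obtain m where m: "m \<in> {1..k}" "p m = Suc k"
      using obtain_preimage_top[OF Suc.prems] by blast
    then show ?thesis
      using Suc.IH[OF permutes_remove_top[OF Suc.prems m]]
        inversions_remove_top[OF Suc.prems m] num_cycles_remove_top[OF Suc.prems m]
      by linarith
  qed
qed

definition tight_perms :: "nat \<Rightarrow> (nat \<Rightarrow> nat) set" where
  "tight_perms n = {p. p permutes {1..n} \<and> inversions n p + num_cycles n p = n}"

lemma finite_tight_perms: "finite (tight_perms n)"
  by (rule finite_subset[of _ "{p. p permutes {1..n}}"])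
    (auto simp: tight_perms_def finite_permutations)

lemma tight_perms_Suc_fixed: "{p \<in> tight_perms (Suc k). p (Suc k) = Suc k} = tight_perms k"
proof (rule set_eqI)
  fix p
  have "p \<in> tight_perms (Suc k) \<and> p (Suc k) = Suc k \<longleftrightarrow>
      p permutes {1..k} \<and> inversions (Suc k) p + num_cycles (Suc k) p = Suc k"
    using permutes_Suc_fixed_iff[of p k] by (auto simp: tight_perms_def)
  also have "\<dots> \<longleftrightarrow> p \<in> tight_perms k"
    using inversions_Suc_eq[of p k] num_cycles_Suc_eq[of p k] by (auto simp: tight_perms_def)
  finally show "p \<in> {p \<in> tight_perms (Suc k). p (Suc k) = Suc k} \<longleftrightarrow> p \<in> tight_perms k"
    by simp
qed

lemma tight_perms_mono: "tight_perms k \<subseteq> tight_perms (Suc k)"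
  using tight_perms_Suc_fixed by blast

text \<open>Removal lowers \<open>n\<close> by one and \<open>I\<close> by \<open>1 + 2 card G\<close>, \<open>G\<close> the later positions with
  values above \<open>p (Suc k)\<close>, while keeping the cycles; by the lower bound for the smaller
  permutation, tightness survives iff \<open>G = {}\<close>.\<close>

lemma remove_top_tight_iff:
  assumes p: "p permutes {1..Suc k}" and m: "m \<in> {1..k}" and pm: "p m = Suc k"
  shows "p \<in> tight_perms (Suc k) \<longleftrightarrow>
           remove_top k p m \<in> tight_perms k \<and> (\<forall>j. m < j \<and> j < Suc k \<longrightarrow> p j < p (Suc k))"
proof -
  define q where "q = remove_top k p m"
  define G where "G = {j. m < j \<and> j < Suc k \<and> p (Suc k) < p j}"
  have q: "q permutes {1..k}" unfolding q_def using permutes_remove_top[OF p m pm] .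
  have "finite G" by (rule finite_subset[of _ "{..<Suc k}"]) (auto simp: G_def)
  moreover have "p j \<noteq> p (Suc k)" if "j < Suc k" for j
    using that permutes_inj[OF p] by (auto dest: injD)
  ultimately have "card G = 0 \<longleftrightarrow> (\<forall>j. m < j \<and> j < Suc k \<longrightarrow> p j < p (Suc k))"
    unfolding G_def by (auto simp: nat_neq_iff)
  moreover have "inversions (Suc k) p = inversions k q + 1 + 2 * card G"
    unfolding q_def G_def using inversions_remove_top[OF p m pm] .
  moreover have "num_cycles (Suc k) p = num_cycles k q"
    unfolding q_def using num_cycles_remove_top[OF p m pm] by simp
  moreover have "k \<le> inversions k q + num_cycles k q" using le_inversions_add_num_cycles[OF q] .
  ultimately show ?thesis using p q unfolding tight_perms_def q_def by auto
qed

lemma tight_perm_suffix_max_eq_top: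
  assumes q: "q \<in> tight_perms (Suc k)" and m: "m \<in> {1..k}"
    and suffix_max: "\<forall>j. m < j \<and> j \<le> Suc k \<longrightarrow> q j < q m"
  shows "q m = Suc k"
proof -
  have qp: "q permutes {1..Suc k}" using q by (simp add: tight_perms_def)
  have bounded: "q m \<le> Suc k" using permutes_in_image[OF qp, of m] m by simp
  have last_below: "q (Suc k) < q m" using suffix_max m by auto
  moreover have "m = m'" if m': "m' \<in> {1..k}" "q m' = Suc k" for m'
  proof -
    have "\<forall>j. m' < j \<and> j < Suc k \<longrightarrow> q j < q (Suc k)"
      using remove_top_tight_iff[OF qp m'] q by blast
    then have "\<not> m' < m" using last_below m by auto
    moreover have "\<not> m < m'" using suffix_max m' bounded by force
    ultimately show ?thesis by simp
  qed
  ultimately show ?thesis using bounded obtain_preimage_top[OF qp] by (cases "q (Suc k) = Suc k") auto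
qed

lemma avoids_321_Suc_fixed:
  assumes p: "p permutes {1..Suc k}" and fixed: "p (Suc k) = Suc k" and av: "avoids_321 k p"
  shows "avoids_321 (Suc k) p"
  unfolding avoids_321_iff
proof (intro allI impI notI)
  fix i j l assume ijl: "1 \<le> i" "i < j" "j < l" "l \<le> Suc k" and pat: "p l < p j \<and> p j < p i"
  have "p j \<le> Suc k" using permutes_in_image[OF p, of j] ijl by simp
  then have "l \<noteq> Suc k" using fixed pat by auto
  then show False using av ijl pat unfolding avoids_321_iff by auto
qed

text \<open>A 321 pattern of \<open>p\<close> avoiding the value \<open>Suc k\<close> is one of \<open>remove_top k p m\<close>, with
  \<open>p (Suc k)\<close> moved to position \<open>m\<close>; the suffix condition rules out the remaining ones.\<close>

lemma avoids_321_remove_top: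
  assumes p: "p permutes {1..Suc k}" and m: "m \<in> {1..k}" and pm: "p m = Suc k"
    and suffix: "\<forall>j. m < j \<and> j < Suc k \<longrightarrow> p j < p (Suc k)"
    and av: "avoids_321 k (remove_top k p m)"
  shows "avoids_321 (Suc k) p"
  unfolding avoids_321_iff
proof (intro allI impI notI)
  define q where "q = remove_top k p m"
  have no_q: "\<not> (q l < q j \<and> q j < q i)" if "1 \<le> i" "i < j" "j < l" "l \<le> k" for i j l
    using av that unfolding avoids_321_iff q_def by blast
  have q_other: "x \<noteq> m \<Longrightarrow> x \<noteq> Suc k \<Longrightarrow> q x = p x" and q_m: "q m = p (Suc k)" for x
    using m by (auto simp: q_def remove_top_def)
  fix i j l assume ijl: "1 \<le> i" "i < j" "j < l" "l \<le> Suc k" and pat: "p l < p j \<and> p j < p i"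
  have "p i \<le> Suc k" "p j \<le> Suc k"
    using ijl permutes_in_image[OF p, of i] permutes_in_image[OF p, of j] by auto
  then have "j \<noteq> m" "l \<noteq> m" using pat pm by auto
  consider "l = Suc k" "j < m" | "l = Suc k" "m < j" | "l \<le> k" "i = m" | "l \<le> k" "i \<noteq> m"
    using ijl \<open>j \<noteq> m\<close> by linarith
  then show False
  proof cases
    case 1
    then show ?thesis using no_q[of i j m] ijl pat m q_other q_m by auto
  next
    case 2
    then show ?thesis using suffix pat ijl by auto
  next
    case 3
    then show ?thesis using no_q[of m j l] ijl pat suffix q_other q_m \<open>l \<noteq> m\<close> by auto
  next
    case 4
    then show ?thesis using no_q[of i j l] ijl pat q_other \<open>j \<noteq> m\<close> \<open>l \<noteq> m\<close> by auto
  qed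
qed

lemma tight_perms_avoid_321: "p \<in> tight_perms n \<Longrightarrow> avoids_321 n p"
proof (induction n arbitrary: p)
  case 0
  then show ?case by (simp add: avoids_321_def)
next
  case (Suc k)
  have p: "p permutes {1..Suc k}" using Suc.prems by (simp add: tight_perms_def)
  show ?case
  proof (cases "p (Suc k) = Suc k")
    case True
    then show ?thesis
      using avoids_321_Suc_fixed[OF p] Suc.IH tight_perms_Suc_fixed Suc.prems by blast
  next
    case False
    obtain m where m: "m \<in> {1..k}" "p m = Suc k" using obtain_preimage_top[OF p False] .
    then show ?thesis
      using avoids_321_remove_top[OF p m] remove_top_tight_iff[OF p m] Suc.IH Suc.prems by blast
  qed
qed

lemma shallow_avoiding_321_iff_tight:
  "(p permutes {1..n} \<and> shallow n p \<and> avoids_321 n p) \<longleftrightarrow> p \<in> tight_perms n"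
proof -
  have "num_cycles n p \<le> n"
    unfolding num_cycles_def using card_image_le[of "{1..n}" "orbit p"] by simp
  then have "p permutes {1..n} \<and> avoids_321 n p \<Longrightarrow>
      shallow n p \<longleftrightarrow> inversions n p + num_cycles n p = n"
    unfolding shallow_def reflection_length_def
    by (simp add: total_displacement_avoiding_321) linarith
  then show ?thesis using tight_perms_avoid_321 by (auto simp: tight_perms_def)
qed

lemma insert_top_tight_iff:
  assumes q: "q permutes {1..k}" and m: "m \<in> {1..k}"
  shows "insert_top k q m \<in> tight_perms (Suc k) \<longleftrightarrow>
           q \<in> tight_perms k \<and> (\<forall>j. m < j \<and> j \<le> k \<longrightarrow> q j < q m)"
proof -
  have "insert_top k q m m = Suc k" using m by (simp add: insert_top_def)
  moreover have "(\<forall>j. m < j \<and> j < Suc k \<longrightarrow> insert_top k q m j < insert_top k q m (Suc k))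
      \<longleftrightarrow> (\<forall>j. m < j \<and> j \<le> k \<longrightarrow> q j < q m)"
    by (auto simp: insert_top_def less_Suc_eq_le)
  ultimately show ?thesis
    using remove_top_tight_iff[OF permutes_insert_top[OF q m] m] remove_insert_top[OF q m] by simp
qed

lemma inj_on_insert_top:
  assumes "\<And>q. q \<in> S \<Longrightarrow> q permutes {1..k} \<and> f q \<in> {1..k}"
  shows "inj_on (\<lambda>q. insert_top k q (f q)) S"
proof (rule inj_on_inverseI)
  fix q assume "q \<in> S"
  then have q: "q permutes {1..k}" and m: "f q \<in> {1..k}" using assms by auto
  have "inv (insert_top k q (f q)) (Suc k) = f q"
    using m by (subst permutes_inv_eq[OF permutes_insert_top[OF q m]]) (simp add: insert_top_def)
  then show "remove_top k (insert_top k q (f q)) (inv (insert_top k q (f q)) (Suc k)) = q"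
    using remove_insert_top[OF q m] by simp
qed

lemma tight_perms_top_at_penultimate:
  "{p \<in> tight_perms (Suc (Suc k)). p (Suc k) = Suc (Suc k)}
     = (\<lambda>q. insert_top (Suc k) q (Suc k)) ` tight_perms (Suc k)"
proof (intro set_eqI iffI)
  fix p assume "p \<in> {p \<in> tight_perms (Suc (Suc k)). p (Suc k) = Suc (Suc k)}"
  then have p: "p permutes {1..Suc (Suc k)}" "p \<in> tight_perms (Suc (Suc k))" "p (Suc k) = Suc (Suc k)"
    by (auto simp: tight_perms_def)
  define q where "q = remove_top (Suc k) p (Suc k)"
  have N: "Suc k \<in> {1..Suc k}" by simp
  have q: "q permutes {1..Suc k}" and pq: "p = insert_top (Suc k) q (Suc k)"
    unfolding q_def using permutes_remove_top[OF p(1) N p(3)] insert_remove_top[of "Suc k" "Suc k" p, OF N p(3)] by auto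
  then have "q \<in> tight_perms (Suc k)" using insert_top_tight_iff[OF q N] p(2) by simp
  then show "p \<in> (\<lambda>q. insert_top (Suc k) q (Suc k)) ` tight_perms (Suc k)" using pq by blast
next
  fix p assume "p \<in> (\<lambda>q. insert_top (Suc k) q (Suc k)) ` tight_perms (Suc k)"
  then obtain q where q: "q \<in> tight_perms (Suc k)" and pq: "p = insert_top (Suc k) q (Suc k)"
    by blast
  have "p \<in> tight_perms (Suc (Suc k))"
    using insert_top_tight_iff[of q "Suc k" "Suc k"] q unfolding pq by (simp add: tight_perms_def)
  then show "p \<in> {p \<in> tight_perms (Suc (Suc k)). p (Suc k) = Suc (Suc k)}"
    by (simp add: pq insert_top_def)
qed

lemma tight_perms_top_before_penultimate:
  "{p \<in> tight_perms (Suc (Suc k)). p (Suc (Suc k)) \<noteq> Suc (Suc k) \<and> p (Suc k) \<noteq> Suc (Suc k)}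
     = (\<lambda>q. insert_top (Suc k) q (inv q (Suc k))) ` (tight_perms (Suc k) - tight_perms k)"
proof (intro set_eqI iffI)
  fix p
  assume "p \<in> {p \<in> tight_perms (Suc (Suc k)). p (Suc (Suc k)) \<noteq> Suc (Suc k) \<and> p (Suc k) \<noteq> Suc (Suc k)}"
  then have p: "p permutes {1..Suc (Suc k)}" "p \<in> tight_perms (Suc (Suc k))"
    and moved: "p (Suc (Suc k)) \<noteq> Suc (Suc k)" "p (Suc k) \<noteq> Suc (Suc k)"
    by (auto simp: tight_perms_def)
  obtain m where m: "m \<in> {1..Suc k}" "p m = Suc (Suc k)" using obtain_preimage_top[OF p(1) moved(1)] .
  have m': "m \<in> {1..k}" using m moved(2) by (auto simp: le_Suc_eq)
  define q where "q = remove_top (Suc k) p m"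
  have q: "q permutes {1..Suc k}" and pq: "p = insert_top (Suc k) q m"
    unfolding q_def using permutes_remove_top[OF p(1) m] insert_remove_top[of m "Suc k" p, OF m] by auto
  then have q_tight: "q \<in> tight_perms (Suc k)" and "\<forall>j. m < j \<and> j \<le> Suc k \<longrightarrow> q j < q m"
    using insert_top_tight_iff[OF q m(1)] p(2) by simp_all
  then have qm: "q m = Suc k" using tight_perm_suffix_max_eq_top[OF q_tight m'] by blast
  then have "q (Suc k) \<noteq> Suc k" using m' injD[OF permutes_inj[OF q], of m "Suc k"] by auto
  then have "q \<notin> tight_perms k" using tight_perms_Suc_fixed by blast
  moreover have "inv q (Suc k) = m" using permutes_inv_eq[OF q] qm by simp
  ultimately show "p \<in> (\<lambda>q. insert_top (Suc k) q (inv q (Suc k))) ` (tight_perms (Suc k) - tight_perms k)"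
    using pq q_tight by auto
next
  fix p assume "p \<in> (\<lambda>q. insert_top (Suc k) q (inv q (Suc k))) ` (tight_perms (Suc k) - tight_perms k)"
  then obtain q where q_tight: "q \<in> tight_perms (Suc k)" and "q \<notin> tight_perms k"
    and pq: "p = insert_top (Suc k) q (inv q (Suc k))"
    by blast
  define m where "m = inv q (Suc k)"
  have q: "q permutes {1..Suc k}" using q_tight by (simp add: tight_perms_def)
  have qm: "q m = Suc k" and m: "m \<in> {1..Suc k}"
    unfolding m_def using permutes_inverses(1)[OF q] permutes_in_image[OF permutes_inv[OF q]] by auto
  have "q (Suc k) \<noteq> Suc k" using \<open>q \<notin> tight_perms k\<close> q_tight tight_perms_Suc_fixed by blast
  then have "m \<noteq> Suc k" using qm by auto
  have bounded: "q j \<in> {1..Suc k}" if "j \<in> {1..Suc k}" for j using permutes_in_image[OF q] that by simp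
  have "q j < q m" if "m < j" "j \<le> Suc k" for j
  proof -
    have "q j \<noteq> q m" using that injD[OF permutes_inj[OF q], of j m] by auto
    then show ?thesis using bounded[of j] that m qm by auto
  qed
  then have "p \<in> tight_perms (Suc (Suc k))"
    using insert_top_tight_iff[OF q m] q_tight unfolding pq m_def[symmetric] by blast
  moreover have "p (Suc k) \<noteq> Suc (Suc k)"
    using \<open>m \<noteq> Suc k\<close> bounded[of "Suc k"] by (simp add: pq insert_top_def m_def[symmetric])
  moreover have "p (Suc (Suc k)) \<noteq> Suc (Suc k)" by (simp add: pq insert_top_def m_def[symmetric] qm)
  ultimately show "p \<in> {p \<in> tight_perms (Suc (Suc k)). p (Suc (Suc k)) \<noteq> Suc (Suc k) \<and> p (Suc k) \<noteq> Suc (Suc k)}"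
    by simp
qed

text \<open>The classes \<open>A\<close>, \<open>B\<close>, \<open>C\<close> below have \<open>t(k+1)\<close>, \<open>t(k+1)\<close> and \<open>t(k+1) - t(k)\<close>
  elements, writing \<open>t(n)\<close> for \<open>card (tight_perms n)\<close>.\<close>

lemma card_tight_perms_recurrence:
  "card (tight_perms (Suc (Suc k))) + card (tight_perms k) = 3 * card (tight_perms (Suc k))"
proof -
  let ?T = "tight_perms (Suc (Suc k))"
  define A where "A = {p \<in> ?T. p (Suc (Suc k)) = Suc (Suc k)}"
  define B where "B = {p \<in> ?T. p (Suc k) = Suc (Suc k)}"
  define C where "C = {p \<in> ?T. p (Suc (Suc k)) \<noteq> Suc (Suc k) \<and> p (Suc k) \<noteq> Suc (Suc k)}"
  have last_two_differ: "p (Suc (Suc k)) \<noteq> p (Suc k)" if "p \<in> ?T" for p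
  proof -
    have "inj p" using that permutes_inj by (auto simp: tight_perms_def)
    then show ?thesis using injD[of p "Suc (Suc k)" "Suc k"] by auto
  qed
  then have "?T = A \<union> B \<union> C" "A \<inter> B = {}" "(A \<union> B) \<inter> C = {}"
    unfolding A_def B_def C_def by (auto dest: last_two_differ)
  moreover have "finite A" "finite B" "finite C"
    unfolding A_def B_def C_def using finite_tight_perms by auto
  ultimately have "card ?T = card A + card B + card C" by (simp add: card_Un_disjoint)
  moreover have "card A = card (tight_perms (Suc k))"
    unfolding A_def tight_perms_Suc_fixed ..
  moreover have "card B = card (tight_perms (Suc k))"
    unfolding B_def tight_perms_top_at_penultimate
    by (rule card_image, rule inj_on_insert_top) (auto simp: tight_perms_def)
  moreover have "card C = card (tight_perms (Suc k) - tight_perms k)"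
    unfolding C_def tight_perms_top_before_penultimate
  proof (rule card_image, rule inj_on_insert_top)
    fix q assume "q \<in> tight_perms (Suc k) - tight_perms k"
    then have q: "q permutes {1..Suc k}" by (simp add: tight_perms_def)
    then show "q permutes {1..Suc k} \<and> inv q (Suc k) \<in> {1..Suc k}"
      using permutes_in_image[OF permutes_inv[OF q], of "Suc k"] by simp
  qed
  moreover have "card (tight_perms (Suc k) - tight_perms k) = card (tight_perms (Suc k)) - card (tight_perms k)"
    and "card (tight_perms k) \<le> card (tight_perms (Suc k))"
    by (simp_all add: card_Diff_subset card_mono finite_tight_perms tight_perms_mono)
  ultimately show ?thesis by linarith
qed

lemma card_tight_perms_0: "card (tight_perms 0) = 1"
proof -
  have "tight_perms 0 = {id}"
    unfolding tight_perms_def by (simp add: inversions_def num_cycles_def)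
  then show ?thesis by simp
qed

lemma card_tight_perms_1: "card (tight_perms 1) = 1"
proof -
  have "p 1 = 1" if "p \<in> tight_perms 1" for p
    using that permutes_in_image[of p "{1..1}" 1] by (simp add: tight_perms_def)
  then have "tight_perms 1 = tight_perms 0" using tight_perms_Suc_fixed[of 0] by auto
  then show ?thesis using card_tight_perms_0 by simp
qed

lemma fib_add_4: "fib (k + 4) + fib k = 3 * fib (k + 2)"
  by (simp add: numeral_eq_Suc)

lemma card_tight_perms: "card (tight_perms (Suc n)) = fib (2 * n + 1)"
proof (induction n rule: fib.induct)
  case 1
  show ?case using card_tight_perms_1 by (simp add: One_nat_def)
next
  case 2
  show ?case using card_tight_perms_recurrence[of 0]
    by (simp add: card_tight_perms_0 card_tight_perms_1[unfolded One_nat_def] numeral_eq_Suc)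
next
  case (3 k)
  have "card (tight_perms (Suc (Suc (Suc k)))) + fib (2 * k + 1) = 3 * fib (2 * k + 1 + 2)"
    using card_tight_perms_recurrence[of "Suc k"] 3 by (simp add: add.commute)
  then show ?case using fib_add_4[of "2 * k + 1"] by (simp add: add.commute)
qed

theorem theorem6p1:
  fixes n :: nat
  assumes "n \<ge> 1"
  shows "card {p. p permutes {1..n} \<and> shallow n p \<and> avoids_321 n p} = fib (2 * n - 1)"
proof -
  obtain k where n: "n = Suc k" using assms by (cases n) auto
  have "{p. p permutes {1..n} \<and> shallow n p \<and> avoids_321 n p} = tight_perms n"
    using shallow_avoiding_321_iff_tight by blast
  then show ?thesis using card_tight_perms[of k] n by simp
qed

end
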